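(* Let $\mathcal E$ be an exchangeability system for a noncommutative probability space $(\mathcal A,\phi)$ and let $(X_i)_{i=1}^n$ and $(Y_i)_{i=1}^n$ be $\mathcal E$-independent families in $\mathcal A$. Then $K_n(X_1+Y_1,\dots,X_n+Y_n)=K_n(X_1,\dots,X_n)+K_n(Y_1,\dots,Y_n)$.
   Context: A noncommutative probability space is a pair $(\mathcal A,\phi)$ of a complex unital algebra $\mathcal A$ and a unital linear functional $\phi$. An exchangeability system $\mathcal E$ for $(\mathcal A,\phi)$ consists of a noncommutative probability space $(\mathcal U,\tilde\phi)$ and a family $(\iota_k)_{k\in\mathbb N}$ of embeddings (injective unital algebra homomorphisms) $\iota_k:\mathcal A\to\mathcal A_k\subseteq\mathcal U$ with $\tilde\phi\circ\iota_k=\phi$; write $X^{(k)}=\iota_k(X)$. It is required that for all $X_1,\dots,X_n\in\mathcal A$, all indices $i_1,\dots,i_n\in\mathbb N$ and every bijection $\sigma$ of $\mathbb N$, $\tilde\phi(X_1^{(i_1)}\cdots X_n^{(i_n)})=\tilde\phi(X_1^{(\sigma(i_1))}\cdots X_n^{(\sigma(i_n))})$; this value depends only on the kernel of $j\mapsto i_j$ (partition of $[n]$ into level sets) and for a partition $\pi$ of $[n]$ it is denoted $\phi_\pi(X_1,\dots,X_n)$. For a primitive $n$-th root of unity $\omega$ put $X_j^\omega=\sum_{k=1}^n\omega^kX_j^{(k)}$ and $K_n(X_1,\dots,X_n)=\frac1n\tilde\phi(X_1^\omega\cdots X_n^\omega)$. Subalgebras $\mathcal B,\mathcal C\subseteq\mathcal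 A$ are $\mathcal E$-independent if for all $X_1,\dots,X_n\in\mathcal B\cup\mathcal C$ and every decomposition $[n]=I\sqcup J$ with $X_i\in\mathcal B$ for $i\in I$, $X_i\in\mathcal C$ for $i\in J$, one has $\phi_\pi(X_1,\dots,X_n)=\phi_{\pi'}(X_1,\dots,X_n)$ whenever $\pi|_I=\pi'|_I$ and $\pi|_J=\pi'|_J$. Two families are $\mathcal E$-independent if the subalgebras they generate are. *)

theory Defs
  imports "HOL-Analysis.Analysis" "HOL-Library.Disjoint_Sets"
begin

class complex_algebra_1 = ring_1 +
  fixes scaleC :: "complex \<Rightarrow> 'a \<Rightarrow> 'a"
  assumes scaleC_add_right: "scaleC a (x + y) = scaleC a x + scaleC a y"
    and scaleC_add_left: "scaleC (a + b) x = scaleC a x + scaleC b x"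
    and scaleC_scaleC: "scaleC a (scaleC b x) = scaleC (a * b) x"
    and scaleC_one: "scaleC 1 x = x"
    and mult_scaleC_left: "scaleC a x * y = scaleC a (x * y)"
    and mult_scaleC_right: "x * scaleC a y = scaleC a (x * y)"

definition ncps :: "('a::complex_algebra_1 \<Rightarrow> complex) \<Rightarrow> bool" where
  "ncps phi \<longleftrightarrow> (\<forall>x y. phi (x + y) = phi x + phi y)
      \<and> (\<forall>c x. phi (scaleC c x) = c * phi x) \<and> phi 1 = 1"

definition embedding :: "('a::complex_algebra_1 \<Rightarrow> 'u::complex_algebra_1) \<Rightarrow> bool" where
  "embedding f \<longleftrightarrow> inj f \<and> f 1 = 1 \<and> (\<forall>x y. f (x + y) = f x + f y)
      \<and> (\<forall>x y. f (x * y) = f x * f y) \<and> (\<forall>c x. f (scaleC c x) = scaleC c (f x))"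

text \<open>The word X_1^(i_1) ... X_n^(i_n) (positions indexed 0..n-1, ordered product).\<close>
definition word :: "(nat \<Rightarrow> 'a \<Rightarrow> 'u::complex_algebra_1) \<Rightarrow> nat \<Rightarrow> (nat \<Rightarrow> nat) \<Rightarrow> (nat \<Rightarrow> 'a) \<Rightarrow> 'u" where
  "word \<iota> n i X = prod_list (map (\<lambda>j. \<iota> (i j) (X j)) [0..<n])"

definition exch_system :: "('a::complex_algebra_1 \<Rightarrow> complex) \<Rightarrow> ('u::complex_algebra_1 \<Rightarrow> complex)
    \<Rightarrow> (nat \<Rightarrow> 'a \<Rightarrow> 'u) \<Rightarrow> bool" where
  "exch_system phi phit \<iota> \<longleftrightarrow> ncps phi \<and> ncps phit
     \<and> (\<forall>k. embedding (\<iota> k) \<and> phit \<circ> \<iota> k = phi)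
     \<and> (\<forall>n X i \<sigma>. bij (\<sigma>::nat \<Rightarrow> nat) \<longrightarrow> phit (word \<iota> n i X) = phit (word \<iota> n (\<sigma> \<circ> i) X))"

definition kernel_part :: "nat \<Rightarrow> (nat \<Rightarrow> nat) \<Rightarrow> nat set set" where
  "kernel_part n i = (\<lambda>l. {j \<in> {0..<n}. i j = i l}) ` {0..<n}"

definition phi_pi :: "('u::complex_algebra_1 \<Rightarrow> complex) \<Rightarrow> (nat \<Rightarrow> 'a \<Rightarrow> 'u) \<Rightarrow> nat
    \<Rightarrow> nat set set \<Rightarrow> (nat \<Rightarrow> 'a) \<Rightarrow> complex" where
  "phi_pi phit \<iota> n \<pi> X = phit (word \<iota> n (SOME i. kernel_part n i = \<pi>) X)"

definition restrict_part :: "'b set set \<Rightarrow> 'b set \<Rightarrow> 'b set set" where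
  "restrict_part \<pi> I = {b \<inter> I | b. b \<in> \<pi> \<and> b \<inter> I \<noteq> {}}"

definition E_indep_alg :: "('u::complex_algebra_1 \<Rightarrow> complex) \<Rightarrow> (nat \<Rightarrow> 'a \<Rightarrow> 'u)
    \<Rightarrow> 'a set \<Rightarrow> 'a set \<Rightarrow> bool" where
  "E_indep_alg phit \<iota> B C \<longleftrightarrow>
     (\<forall>n X I J. I \<union> J = {0..<n} \<and> I \<inter> J = {} \<and> (\<forall>j\<in>I. X j \<in> B) \<and> (\<forall>j\<in>J. X j \<in> C) \<longrightarrow>
        (\<forall>\<pi> \<pi>'. partition_on {0..<n} \<pi> \<and> partition_on {0..<n} \<pi>'
            \<and> restrict_part \<pi> I = restrict_part \<pi>' I \<and> restrict_part \<pi> J = restrict_part \<pi>' J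
            \<longrightarrow> phi_pi phit \<iota> n \<pi> X = phi_pi phit \<iota> n \<pi>' X))"

definition subalg_gen :: "'a::complex_algebra_1 set \<Rightarrow> 'a set" where
  "subalg_gen S = \<Inter>{B. S \<subseteq> B \<and> 1 \<in> B \<and> (\<forall>x\<in>B. \<forall>y\<in>B. x + y \<in> B \<and> x * y \<in> B)
                      \<and> (\<forall>c. \<forall>x\<in>B. scaleC c x \<in> B)}"

definition E_indep_fam :: "('u::complex_algebra_1 \<Rightarrow> complex) \<Rightarrow> (nat \<Rightarrow> 'a \<Rightarrow> 'u)
    \<Rightarrow> nat \<Rightarrow> (nat \<Rightarrow> 'a::complex_algebra_1) \<Rightarrow> (nat \<Rightarrow> 'a) \<Rightarrow> bool" where
  "E_indep_fam phit \<iota> n X Y \<longleftrightarrow>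
     E_indep_alg phit \<iota> (subalg_gen (X ` {0..<n})) (subalg_gen (Y ` {0..<n}))"

definition primitive_root :: "nat \<Rightarrow> complex \<Rightarrow> bool" where
  "primitive_root n \<omega> \<longleftrightarrow> 0 < n \<and> \<omega> ^ n = 1 \<and> (\<forall>m. 0 < m \<and> m < n \<longrightarrow> \<omega> ^ m \<noteq> 1)"

definition X_omega :: "(nat \<Rightarrow> 'a \<Rightarrow> 'u::complex_algebra_1) \<Rightarrow> nat \<Rightarrow> complex \<Rightarrow> 'a \<Rightarrow> 'u" where
  "X_omega \<iota> n \<omega> x = (\<Sum>k=1..n. scaleC (\<omega> ^ k) (\<iota> k x))"

definition K :: "('u::complex_algebra_1 \<Rightarrow> complex) \<Rightarrow> (nat \<Rightarrow> 'a \<Rightarrow> 'u) \<Rightarrow> nat \<Rightarrow> complex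
    \<Rightarrow> (nat \<Rightarrow> 'a) \<Rightarrow> complex" where
  "K phit \<iota> n \<omega> X = (1 / of_nat n) * phit (prod_list (map (\<lambda>j. X_omega \<iota> n \<omega> (X j)) [0..<n]))"

end

theory Submission
  imports Defs
begin

(*
  Expanding each factor (X_j + Y_j)^omega splits the moment of the sums into 2^n moments of
  words whose j-th letter is X_j^omega for j in S and Y_j^omega otherwise; S = [n] and S = {}
  give K_n(X) and K_n(Y), so it remains to show that every mixed word has vanishing moment.
  With Z_j = X_j on S and Z_j = Y_j off S, that moment expands into the sum over
  i : [n] -> [1..n] of omega^(i_1 + ... + i_n) phi(Z_1^(i_1) ... Z_n^(i_n)).  Shifting the
  indices cyclically (k -> k + 1 mod n) at the positions in S permutes the index maps and
  preserves the kernel of i on S and on its complement, so by E-independence and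
  exchangeability it leaves every phi-term unchanged, while it multiplies the coefficient by
  omega^|S|.  As 0 < |S| < n and omega is primitive, omega^|S| is not 1, hence the sum vanishes.
*)

lemma scaleC_mult_scaleC: "scaleC a (x::'a::complex_algebra_1) * scaleC b y = scaleC (a * b) (x * y)"
  by (simp add: mult_scaleC_left mult_scaleC_right scaleC_scaleC mult.commute)

lemma prod_list_scaleC:
  "prod_list (map (\<lambda>j. scaleC (c j) (u j :: 'a::complex_algebra_1)) xs)
     = scaleC (prod_list (map c xs)) (prod_list (map u xs))"
  by (induction xs) (simp_all add: scaleC_one scaleC_mult_scaleC)

lemma prod_list_sum_PiE:
  fixes u :: "nat \<Rightarrow> 'k \<Rightarrow> 'a::ring_1"
  assumes "\<And>j. finite (A j)"
  shows "prod_list (map (\<lambda>j. \<Sum>k\<in>A j. u j k) [0..<n])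
           = (\<Sum>i\<in>PiE {0..<n} A. prod_list (map (\<lambda>j. u j (i j)) [0..<n]))"
proof (induction n)
  case 0
  then show ?case by simp
next
  case (Suc n)
  have word_upd: "prod_list (map (\<lambda>j. u j ((i(n := k)) j)) [0..<Suc n])
                    = prod_list (map (\<lambda>j. u j (i j)) [0..<n]) * u n k" for i k
  proof -
    have "map (\<lambda>j. u j ((i(n := k)) j)) [0..<n] = map (\<lambda>j. u j (i j)) [0..<n]"
      by (rule map_cong) auto
    then show ?thesis
      by (simp add: fun_upd_same del: fun_upd_apply map_eq_conv)
  qed
  have "prod_list (map (\<lambda>j. \<Sum>k\<in>A j. u j k) [0..<Suc n])
          = (\<Sum>i\<in>PiE {0..<n} A. prod_list (map (\<lambda>j. u j (i j)) [0..<n])) * (\<Sum>k\<in>A n. u n k)"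
    by (simp add: Suc.IH)
  also have "\<dots> = (\<Sum>(k, i)\<in>A n \<times> PiE {0..<n} A. prod_list (map (\<lambda>j. u j (i j)) [0..<n]) * u n k)"
    unfolding sum_product by (subst sum.swap) (simp add: sum.cartesian_product)
  also have "\<dots> = (\<Sum>i\<in>PiE {0..<Suc n} A. prod_list (map (\<lambda>j. u j (i j)) [0..<Suc n]))"
    unfolding atLeast0_lessThan_Suc PiE_insert_eq
    by (subst sum.reindex[OF inj_combinator]) (simp_all add: comp_def case_prod_unfold word_upd del: upt_Suc fun_upd_apply)
  finally show ?case .
qed

lemma prod_list_add_expand:
  fixes f g :: "nat \<Rightarrow> 'a::ring_1"
  shows "prod_list (map (\<lambda>j. f j + g j) [0..<n])
           = (\<Sum>S\<in>Pow {0..<n}. prod_list (map (\<lambda>j. if j \<in> S then f j else g j) [0..<n]))"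
proof -
  have bij: "bij_betw (\<lambda>S. restrict (\<lambda>j. j \<in> S) {0..<n}) (Pow {0..<n}) (PiE {0..<n} (\<lambda>_. UNIV))"
    by (rule bij_betwI[of _ _ _ "\<lambda>b. {j \<in> {0..<n}. b j}"]) (auto simp: PiE_iff extensional_def fun_eq_iff)
  have "prod_list (map (\<lambda>j. f j + g j) [0..<n])
          = prod_list (map (\<lambda>j. \<Sum>b\<in>UNIV. if b then f j else g j) [0..<n])"
    by (simp add: UNIV_bool add.commute)
  also have "\<dots> = (\<Sum>b\<in>PiE {0..<n} (\<lambda>_. UNIV). prod_list (map (\<lambda>j. if b j then f j else g j) [0..<n]))"
    by (rule prod_list_sum_PiE) simp
  also have "\<dots> = (\<Sum>S\<in>Pow {0..<n}. prod_list (map (\<lambda>j. if j \<in> S then f j else g j) [0..<n]))"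
    unfolding sum.reindex_bij_betw[OF bij, symmetric]
    by (intro sum.cong refl arg_cong[where f = prod_list] map_cong) auto
  finally show ?thesis .
qed

lemma ncps_zero: "ncps phi \<Longrightarrow> phi 0 = 0"
  unfolding ncps_def by (metis add.right_neutral add_left_cancel)

lemma ncps_sum: "ncps phi \<Longrightarrow> phi (sum f A) = (\<Sum>x\<in>A. phi (f x))"
  by (induction A rule: infinite_finite_induct) (auto simp: ncps_zero ncps_def)

lemma ncps_scaleC: "ncps phi \<Longrightarrow> phi (scaleC c x) = c * phi x"
  by (simp add: ncps_def)

lemma exch_system_ncps: "exch_system phi phit \<iota> \<Longrightarrow> ncps phit"
  by (simp add: exch_system_def)

lemma exch_system_bij_invariant:
  assumes "exch_system phi phit \<iota>" "bij \<sigma>"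
  shows "phit (word \<iota> n (\<sigma> \<circ> i) X) = phit (word \<iota> n i X)"
proof -
  have "\<forall>n X i \<sigma>. bij (\<sigma>::nat \<Rightarrow> nat) \<longrightarrow> phit (word \<iota> n i X) = phit (word \<iota> n (\<sigma> \<circ> i) X)"
    using assms(1) unfolding exch_system_def by blast
  then show ?thesis
    using assms(2) by metis
qed

lemma X_omega_add:
  assumes "exch_system phi phit \<iota>"
  shows "X_omega \<iota> n \<omega> (x + y) = X_omega \<iota> n \<omega> x + X_omega \<iota> n \<omega> y"
proof -
  have "\<iota> k (x + y) = \<iota> k x + \<iota> k y" for k
    using assms unfolding exch_system_def embedding_def by blast
  then show ?thesis unfolding X_omega_def by (simp add: scaleC_add_right sum.distrib)
qed

lemma phit_prod_X_omega_expand: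
  assumes "ncps phit"
  shows "phit (prod_list (map (\<lambda>j. X_omega \<iota> n \<omega> (Z j)) [0..<n]))
           = (\<Sum>i\<in>PiE {0..<n} (\<lambda>_. {1..n}). (\<Prod>j<n. \<omega> ^ i j) * phit (word \<iota> n i Z))"
proof -
  have "prod_list (map (\<lambda>j. X_omega \<iota> n \<omega> (Z j)) [0..<n])
          = (\<Sum>i\<in>PiE {0..<n} (\<lambda>_. {1..n}). prod_list (map (\<lambda>j. scaleC (\<omega> ^ i j) (\<iota> (i j) (Z j))) [0..<n]))"
    unfolding X_omega_def by (rule prod_list_sum_PiE) simp
  also have "\<dots> = (\<Sum>i\<in>PiE {0..<n} (\<lambda>_. {1..n}). scaleC (\<Prod>j<n. \<omega> ^ i j) (word \<iota> n i Z))"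
    by (simp add: prod_list_scaleC word_def atLeast0LessThan flip: prod.distinct_set_conv_list)
  finally show ?thesis by (simp add: ncps_sum[OF assms] ncps_scaleC[OF assms])
qed

lemma kernel_part_eqD:
  assumes "kernel_part n i = kernel_part n i'" "j < n" "l < n"
  shows "i j = i l \<longleftrightarrow> i' j = i' l"
proof -
  have "{j \<in> {0..<n}. i j = i l} \<in> kernel_part n i"
    using assms(3) unfolding kernel_part_def by (intro image_eqI[where x = l]) auto
  then have "{j \<in> {0..<n}. i j = i l} \<in> kernel_part n i'"
    by (simp only: assms(1))
  then obtain m where m: "{j \<in> {0..<n}. i j = i l} = {j \<in> {0..<n}. i' j = i' m}"
    unfolding kernel_part_def by blast
  have "l \<in> {j \<in> {0..<n}. i j = i l}"
    using assms(3) by simp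
  then have "i' l = i' m"
    unfolding m by simp
  then show ?thesis
    using m[unfolded set_eq_iff, rule_format, of j] assms(2) by simp
qed

lemma bij_betw_extend_to_bij:
  fixes f :: "'a \<Rightarrow> 'a"
  assumes f: "bij_betw f A B" and "finite A" "finite B"
  obtains \<sigma> where "bij \<sigma>" "\<forall>x\<in>A. \<sigma> x = f x"
proof -
  let ?C = "A \<union> B"
  have "card (?C - A) = card (?C - B)"
    using bij_betw_same_card[OF f] assms(2,3) by (simp add: card_Diff_subset)
  then obtain g where g: "bij_betw g (?C - A) (?C - B)"
    using finite_same_card_bij assms(2,3) by (metis finite_Diff finite_UnI)
  have on_C: "bij_betw (\<lambda>x. if x \<in> A then f x else g x) ?C ?C"
    using bij_betw_disjoint_Un[OF f g] by (simp add: Un_absorb1 Un_Diff_cancel)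
  define \<sigma> where "\<sigma> x = (if x \<in> ?C then if x \<in> A then f x else g x else x)" for x
  have "bij_betw \<sigma> (?C \<union> - ?C) (?C \<union> - ?C)"
    using bij_betw_disjoint_Un[OF on_C bij_betw_id[of "- ?C"]] unfolding \<sigma>_def id_def by blast
  then have "bij \<sigma>"
    by (simp only: Compl_partition)
  then show thesis
    by (rule that) (simp add: \<sigma>_def)
qed

lemma kernel_preserving_relabelling:
  fixes i i' :: "nat \<Rightarrow> nat"
  assumes same_kernel: "\<forall>j<n. \<forall>l<n. i j = i l \<longleftrightarrow> i' j = i' l"
  obtains \<sigma> where "bij \<sigma>" "\<forall>j<n. \<sigma> (i j) = i' j"
proof -
  define f where "f a = i' (inv_into {0..<n} i a)" for a
  have f_i: "f (i j) = i' j" if "j < n" for j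
  proof -
    have "inv_into {0..<n} i (i j) < n" "i (inv_into {0..<n} i (i j)) = i j"
      using that inv_into_into[of "i j" i "{0..<n}"] f_inv_into_f[of "i j" i "{0..<n}"] by auto
    then show ?thesis
      unfolding f_def using same_kernel that by blast
  qed
  have "bij_betw f (i ` {0..<n}) (i' ` {0..<n})"
  proof (rule bij_betw_imageI)
    show "inj_on f (i ` {0..<n})"
      using same_kernel by (auto intro!: inj_onI simp: f_i)
    show "f ` i ` {0..<n} = i' ` {0..<n}"
      by (force simp: f_i image_iff)
  qed
  then obtain \<sigma> where "bij \<sigma>" "\<forall>x\<in>i ` {0..<n}. \<sigma> x = f x"
    by (rule bij_betw_extend_to_bij) auto
  then show thesis
    by (intro that) (auto simp: f_i)
qed

lemma word_cong:
  "(\<And>j. j < n \<Longrightarrow> i j = i' j) \<Longrightarrow> word \<iota> n i X = word \<iota> n i' X"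
  unfolding word_def by (intro arg_cong[where f = prod_list] map_cong) auto

lemma phi_pi_kernel_part:
  assumes "exch_system phi phit \<iota>"
  shows "phi_pi phit \<iota> n (kernel_part n i) Z = phit (word \<iota> n i Z)"
proof -
  define i0 where "i0 = (SOME i0. kernel_part n i0 = kernel_part n i)"
  have "kernel_part n i0 = kernel_part n i"
    unfolding i0_def by (rule someI[of _ i]) (rule refl)
  then have "\<forall>j<n. \<forall>l<n. i j = i l \<longleftrightarrow> i0 j = i0 l"
    using kernel_part_eqD[of n i i0] by metis
  then obtain \<sigma> where \<sigma>: "bij \<sigma>" "\<forall>j<n. \<sigma> (i j) = i0 j"
    by (rule kernel_preserving_relabelling)
  have "phit (word \<iota> n i Z) = phit (word \<iota> n (\<sigma> \<circ> i) Z)"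
    using exch_system_bij_invariant[OF assms \<sigma>(1)] by simp
  also have "\<dots> = phit (word \<iota> n i0 Z)"
    using \<sigma>(2) by (intro arg_cong[where f = phit] word_cong) simp
  finally show ?thesis
    unfolding phi_pi_def i0_def[symmetric] by simp
qed

lemma partition_on_kernel_part: "partition_on {0..<n} (kernel_part n i)"
  by (rule partition_onI) (auto simp: kernel_part_def disjnt_def)

lemma restrict_part_kernel_part:
  assumes "I \<subseteq> {0..<n}"
  shows "restrict_part (kernel_part n i) I = (\<lambda>l. {j \<in> I. i j = i l}) ` I"
proof
  show "restrict_part (kernel_part n i) I \<subseteq> (\<lambda>l. {j \<in> I. i j = i l}) ` I"
  proof
    fix c assume "c \<in> restrict_part (kernel_part n i) I"
    then obtain m l where "c = {j \<in> {0..<n}. i j = i m} \<inter> I" and "l \<in> c"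
      unfolding restrict_part_def kernel_part_def by blast
    then have "c = {j \<in> I. i j = i l}" "l \<in> I"
      using assms by auto
    then show "c \<in> (\<lambda>l. {j \<in> I. i j = i l}) ` I"
      by blast
  qed
  show "(\<lambda>l. {j \<in> I. i j = i l}) ` I \<subseteq> restrict_part (kernel_part n i) I"
  proof
    fix c assume "c \<in> (\<lambda>l. {j \<in> I. i j = i l}) ` I"
    then obtain l where "l \<in> I" "c = {j \<in> I. i j = i l}"
      by blast
    then have "c = {j \<in> {0..<n}. i j = i l} \<inter> I" "{j \<in> {0..<n}. i j = i l} \<in> kernel_part n i" "c \<noteq> {}"
      using assms by (auto simp: kernel_part_def)
    then show "c \<in> restrict_part (kernel_part n i) I"
      unfolding restrict_part_def by blast
  qed
qed

lemma restrict_part_kernel_part_cong: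
  assumes "I \<subseteq> {0..<n}" "\<forall>j\<in>I. \<forall>l\<in>I. i j = i l \<longleftrightarrow> i' j = i' l"
  shows "restrict_part (kernel_part n i) I = restrict_part (kernel_part n i') I"
  unfolding restrict_part_kernel_part[OF assms(1)]
  by (intro image_cong refl Collect_cong) (use assms(2) in blast)

lemma E_indep_word_eq:
  assumes ex: "exch_system phi phit \<iota>" and ind: "E_indep_alg phit \<iota> B C"
    and S: "S \<subseteq> {0..<n}" and ZB: "\<forall>j\<in>S. Z j \<in> B" and ZC: "\<forall>j\<in>{0..<n} - S. Z j \<in> C"
    and on_S: "\<forall>j\<in>S. \<forall>l\<in>S. i j = i l \<longleftrightarrow> i' j = i' l"
    and off_S: "\<forall>j\<in>{0..<n} - S. \<forall>l\<in>{0..<n} - S. i j = i l \<longleftrightarrow> i' j = i' l"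
  shows "phit (word \<iota> n i Z) = phit (word \<iota> n i' Z)"
proof -
  have S_compl: "S \<union> ({0..<n} - S) = {0..<n}" "S \<inter> ({0..<n} - S) = {}"
    using S by auto
  have restr_S: "restrict_part (kernel_part n i) S = restrict_part (kernel_part n i') S"
    using S on_S by (rule restrict_part_kernel_part_cong)
  have restr_off_S: "restrict_part (kernel_part n i) ({0..<n} - S) = restrict_part (kernel_part n i') ({0..<n} - S)"
    using off_S by (intro restrict_part_kernel_part_cong) auto
  have "phi_pi phit \<iota> n (kernel_part n i) Z = phi_pi phit \<iota> n (kernel_part n i') Z"
    by (rule ind[unfolded E_indep_alg_def, rule_format, where I = S and J = "{0..<n} - S"])
      (intro conjI partition_on_kernel_part S_compl ZB ZC restr_S restr_off_S)+
  then show ?thesis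
    unfolding phi_pi_kernel_part[OF ex] .
qed

definition cyclic_succ :: "nat \<Rightarrow> nat \<Rightarrow> nat" where
  "cyclic_succ n k = (if k = n then 1 else Suc k)"

lemma cyclic_succ_in: "k \<in> {1..n} \<Longrightarrow> cyclic_succ n k \<in> {1..n}"
  by (auto simp: cyclic_succ_def)

lemma inj_on_cyclic_succ: "inj_on (cyclic_succ n) {1..n}"
proof (rule inj_onI)
  fix a b assume "a \<in> {1..n}" "b \<in> {1..n}" "cyclic_succ n a = cyclic_succ n b"
  then show "a = b"
    by (cases "a = n"; cases "b = n") (auto simp: cyclic_succ_def)
qed

lemma power_cyclic_succ: "\<omega> ^ n = 1 \<Longrightarrow> \<omega> ^ cyclic_succ n k = \<omega> * \<omega> ^ k"
  by (simp add: cyclic_succ_def)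

definition shift_on :: "nat \<Rightarrow> nat set \<Rightarrow> (nat \<Rightarrow> nat) \<Rightarrow> nat \<Rightarrow> nat" where
  "shift_on n S i = (\<lambda>j. if j \<in> S then cyclic_succ n (i j) else i j)"

lemma bij_betw_shift_on:
  assumes S: "S \<subseteq> {0..<n}"
  shows "bij_betw (shift_on n S) (PiE {0..<n} (\<lambda>_. {1..n})) (PiE {0..<n} (\<lambda>_. {1..n}))"
proof -
  let ?P = "PiE {0..<n} (\<lambda>_. {1..n})"
  have "inj_on (shift_on n S) ?P"
  proof (rule inj_onI, rule ext)
    fix i i' j assume i: "i \<in> ?P" and i': "i' \<in> ?P" and eq: "shift_on n S i = shift_on n S i'"
    show "i j = i' j"
    proof (cases "j \<in> S")
      case True
      then have "j \<in> {0..<n}"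
        using S by blast
      then have "i j \<in> {1..n}" "i' j \<in> {1..n}"
        using PiE_mem[OF i] PiE_mem[OF i'] by auto
      moreover have "cyclic_succ n (i j) = cyclic_succ n (i' j)"
        using fun_cong[OF eq, of j] True by (simp add: shift_on_def)
      ultimately show ?thesis
        using inj_onD[OF inj_on_cyclic_succ] by blast
    next
      case False
      then show ?thesis
        using fun_cong[OF eq, of j] by (simp add: shift_on_def)
    qed
  qed
  moreover have "shift_on n S i \<in> ?P" if i: "i \<in> ?P" for i
  proof (rule PiE_I)
    show "shift_on n S i j \<in> {1..n}" if "j \<in> {0..<n}" for j
      using PiE_mem[OF i that] cyclic_succ_in[OF PiE_mem[OF i that]] by (simp add: shift_on_def)
    show "shift_on n S i j = undefined" if "j \<notin> {0..<n}" for j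
      using PiE_arb[OF i that] that S by (auto simp: shift_on_def)
  qed
  ultimately show ?thesis
    by (simp add: bij_betw_def endo_inj_surj finite_PiE image_subset_iff)
qed

lemma shift_on_kernel:
  assumes "i \<in> PiE {0..<n} (\<lambda>_. {1..n})" "S \<subseteq> {0..<n}"
  shows "\<forall>j\<in>S. \<forall>l\<in>S. shift_on n S i j = shift_on n S i l \<longleftrightarrow> i j = i l"
    and "\<forall>j\<in>- S. \<forall>l\<in>- S. shift_on n S i j = shift_on n S i l \<longleftrightarrow> i j = i l"
  using assms inj_on_cyclic_succ[of n] by (auto simp: shift_on_def inj_on_def PiE_iff subset_iff)

lemma prod_power_shift_on:
  assumes "\<omega> ^ n = 1" "S \<subseteq> {0..<n}"
  shows "(\<Prod>j<n. \<omega> ^ shift_on n S i j) = \<omega> ^ card S * (\<Prod>j<n. \<omega> ^ i j)"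
proof -
  have "(\<Prod>j<n. \<omega> ^ shift_on n S i j) = (\<Prod>j<n. (if j \<in> S then \<omega> else 1) * \<omega> ^ i j)"
    by (intro prod.cong) (simp_all add: shift_on_def power_cyclic_succ assms(1))
  also have "\<dots> = (\<Prod>j<n. if j \<in> S then \<omega> else 1) * (\<Prod>j<n. \<omega> ^ i j)"
    by (rule prod.distrib)
  also have "(\<Prod>j<n. if j \<in> S then \<omega> else 1) = \<omega> ^ card S"
    using assms(2) by (simp add: prod.If_cases Int_absorb1 atLeast0LessThan)
  finally show ?thesis .
qed

lemma phit_prod_X_omega_mixed_eq_0:
  assumes ex: "exch_system phi phit \<iota>" and ind: "E_indep_alg phit \<iota> B C"
    and \<omega>: "primitive_root n \<omega>"
    and S: "S \<subseteq> {0..<n}" "S \<noteq> {}" "S \<noteq> {0..<n}"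
    and ZB: "\<forall>j\<in>S. Z j \<in> B" and ZC: "\<forall>j\<in>{0..<n} - S. Z j \<in> C"
  shows "phit (prod_list (map (\<lambda>j. X_omega \<iota> n \<omega> (Z j)) [0..<n])) = 0"
proof -
  let ?P = "PiE {0..<n} (\<lambda>_. {1..n})"
  define F where "F i = (\<Prod>j<n. \<omega> ^ i j) * phit (word \<iota> n i Z)" for i
  have "\<omega> ^ n = 1"
    using \<omega> by (simp add: primitive_root_def)
  have "0 < card S" "card S < n"
    using S finite_subset[OF S(1)] by (auto simp: card_gt_0_iff intro: psubset_card_mono[of "{0..<n}", simplified])
  then have \<omega>_card_S: "\<omega> ^ card S \<noteq> 1"
    using \<omega> unfolding primitive_root_def by blast
  have F_shift: "F (shift_on n S i) = \<omega> ^ card S * F i" if "i \<in> ?P" for i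
  proof -
    have "phit (word \<iota> n (shift_on n S i) Z) = phit (word \<iota> n i Z)"
      using shift_on_kernel[OF that S(1)] by (intro E_indep_word_eq[OF ex ind S(1) ZB ZC]) auto
    then show ?thesis
      unfolding F_def prod_power_shift_on[OF \<open>\<omega> ^ n = 1\<close> S(1)] by simp
  qed
  have "(\<Sum>i\<in>?P. F i) = (\<Sum>i\<in>?P. F (shift_on n S i))"
    by (rule sum.reindex_bij_betw[OF bij_betw_shift_on[OF S(1)], symmetric])
  also have "\<dots> = \<omega> ^ card S * (\<Sum>i\<in>?P. F i)"
    by (simp add: F_shift sum_distrib_left)
  finally have "(1 - \<omega> ^ card S) * (\<Sum>i\<in>?P. F i) = 0"
    by (simp add: algebra_simps)
  with \<omega>_card_S have "(\<Sum>i\<in>?P. F i) = 0"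
    by simp
  then show ?thesis
    unfolding phit_prod_X_omega_expand[OF exch_system_ncps[OF ex]] F_def .
qed

lemma subset_subalg_gen: "S \<subseteq> subalg_gen S"
  unfolding subalg_gen_def by blast

theorem corollary2p3:
  fixes phi :: "'a::complex_algebra_1 \<Rightarrow> complex"
    and phit :: "'u::complex_algebra_1 \<Rightarrow> complex"
    and \<iota> :: "nat \<Rightarrow> 'a \<Rightarrow> 'u"
    and X Y :: "nat \<Rightarrow> 'a" and n :: nat and \<omega> :: complex
  assumes "exch_system phi phit \<iota>"
    and "E_indep_fam phit \<iota> n X Y"
    and "primitive_root n \<omega>"
  shows "K phit \<iota> n \<omega> (\<lambda>j. X j + Y j) = K phit \<iota> n \<omega> X + K phit \<iota> n \<omega> Y"
proof -
  let ?M = "\<lambda>Z. phit (prod_list (map (\<lambda>j. X_omega \<iota> n \<omega> (Z j)) [0..<n]))"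
  let ?Z = "\<lambda>S j. if j \<in> S then X j else Y j"
  have "{0..<n} \<noteq> {}"
    using assms(3) by (simp add: primitive_root_def)
  have mixed: "?M (?Z S) = 0" if "S \<in> Pow {0..<n} - {{0..<n}, {}}" for S
  proof (rule phit_prod_X_omega_mixed_eq_0[OF assms(1) assms(2)[unfolded E_indep_fam_def] assms(3)])
    show "S \<subseteq> {0..<n}" "S \<noteq> {}" "S \<noteq> {0..<n}"
      using that by auto
    show "\<forall>j\<in>S. ?Z S j \<in> subalg_gen (X ` {0..<n})"
      using that by (auto intro: subset_subalg_gen[THEN subsetD])
    show "\<forall>j\<in>{0..<n} - S. ?Z S j \<in> subalg_gen (Y ` {0..<n})"
      by (auto intro: subset_subalg_gen[THEN subsetD])
  qed
  have "?M (\<lambda>j. X j + Y j) = (\<Sum>S\<in>Pow {0..<n}. ?M (?Z S))"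
    by (simp add: X_omega_add[OF assms(1)] prod_list_add_expand if_distrib
        ncps_sum[OF exch_system_ncps[OF assms(1)]])
  also have "\<dots> = (\<Sum>S\<in>{{0..<n}, {}}. ?M (?Z S))"
    using mixed by (intro sum.mono_neutral_right) auto
  also have "\<dots> = ?M (?Z {0..<n}) + ?M (?Z {})"
    using \<open>{0..<n} \<noteq> {}\<close> by simp
  also have "?M (?Z {0..<n}) = ?M X"
    by (intro arg_cong[where f = phit] arg_cong[where f = prod_list] map_cong) auto
  also have "?M (?Z {}) = ?M Y"
    by simp
  finally show ?thesis
    unfolding K_def by (simp add: distrib_left)
qed

end
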